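(* Let $L^\bullet$ be a generalized operator algebra with the block-matrix property and let $$\mathfrak A_{\mathfrak P}:0\to H(g^0;P_0)\xrightarrow{A_0}H(g^1;P_1)\xrightarrow{A_1}H(g^2;P_2)\to\cdots$$ be a complex with $A_j\in T^0((g^j,g^{j+1});P_j,P_{j+1})$, $j\ge0$. Let $\mathfrak A^\wedge_{\mathfrak P}$ be its lift. Then $$\ker A_{[j]}=\ker\big(A_j:H(g^j,P_j)\to H(g^{j+1},P_{j+1})\big)\oplus\ker P_{j-1}\oplus\mathrm{im}\,P_{j-2}\oplus\ker P_{j-3}\oplus\cdots,$$ $$\mathrm{im}\,A_{[j]}=\mathrm{im}\big(A_j:H(g^j,P_j)\to H(g^{j+1},P_{j+1})\big)\oplus\ker P_j\oplus\mathrm{im}\,P_{j-1}\oplus\ker P_{j-2}\oplus\cdots,$$ (images and kernels of $P_k$ taken in $H(g^k)$); consequently $\mathcal H_j(\mathfrak A_{\mathfrak P})\cong\mathcal H_j(\mathfrak A^\wedge_{\mathfrak P})$ for all $j\ge0$, and $\mathfrak A_{\mathfrak P}$ is Fredholm (resp. exact) iff $\mathfrak A^\wedge_{\mathfrak P}$ is Fredholm (resp. exact).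
   Context: Generalized operator algebra $L^\bullet$: weights $g\in G$ with Hilbert spaces $H(g)$, spaces $L^{-\infty}((g^0,g^1))\subset L^0((g^0,g^1))\subset\mathcal L(H(g^0),H(g^1))$ closed under composition and adjoints, containing identities, smoothing operators compact. Block-matrix property: there is an associative map $(g^0,g^1)\mapsto g^0\oplus g^1$ on $G$ with $H(g^0\oplus g^1)=H(g^0)\oplus H(g^1)$ such that $L^\mu$ of pairs of direct sums is identified with block matrices whose entries lie in $L^\mu$ of the corresponding pairs. For projections $P_j\in L^0((g^j,g^j))$, $H(g,P):=P(H(g))$ and $T^\mu((g^0,g^1);P_0,P_1)=\{A\in L^\mu((g^0,g^1)):(1-P_1)A=0,\ A(1-P_0)=0\}$. Lift: $g^{[j]}:=g^j\oplus g^{j-1}\oplus\cdots\oplus g^0$ and $A_{[j]}\in L^0((g^{[j]},g^{[j+1]}))$, $A_{[j]}(u_j,u_{j-1},\dots,u_0)=(A_ju_j,(1-P_j)u_j,P_{j-1}u_{j-1},(1-P_{j-2})u_{j-2},P_{j-3}u_{j-3},\dots)$; then $A_{[j+1]}A_{[j]}=0$ and $\mathfrak A^\wedge_{\mathfrak P}:0\to H(g^{[0]})\xrightarrow{A_{[0]}}H(g^{[1]})\xrightarrow{A_{[1]}}\cdots$ is the lift. $\mathcal H_j$ denotes cohomology $\ker/\mathrm{im}$. *)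

theory Defs
  imports "HOL-Analysis.Analysis" "HOL-Library.Function_Algebras"
begin

text \<open>Elements of a finite direct sum H(g^k) + ... + H(g^0) are modelled as
  functions nat => 'v whose k-th component lies in H(g^k), zero outside the range.\<close>

instantiation "fun" :: (type, real_vector) real_vector
begin
definition scaleR_fun :: "real \<Rightarrow> ('a \<Rightarrow> 'b) \<Rightarrow> 'a \<Rightarrow> 'b"
  where "scaleR_fun c f = (\<lambda>x. c *\<^sub>R f x)"
instance
  by standard (auto simp: scaleR_fun_def fun_eq_iff algebra_simps scaleR_add_right scaleR_add_left)
end

definition cker :: "(nat \<Rightarrow> 'a set) \<Rightarrow> (nat \<Rightarrow> 'a \<Rightarrow> 'a::real_vector) \<Rightarrow> nat \<Rightarrow> 'a set"
  where "cker W D j = {x \<in> W j. D j x = 0}"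

definition cim :: "(nat \<Rightarrow> 'a set) \<Rightarrow> (nat \<Rightarrow> 'a \<Rightarrow> 'a::real_vector) \<Rightarrow> nat \<Rightarrow> 'a set"
  where "cim W D j = (if j = 0 then {0} else D (j - 1) ` W (j - 1))"

text \<open>H_j(W,D) \<cong> H_j(W',D'): a linear map between the kernels inducing a bijection
  of the quotients ker/im.\<close>
definition cohom_iso ::
  "(nat \<Rightarrow> 'a set) \<Rightarrow> (nat \<Rightarrow> 'a \<Rightarrow> 'a::real_vector) \<Rightarrow>
   (nat \<Rightarrow> 'b set) \<Rightarrow> (nat \<Rightarrow> 'b \<Rightarrow> 'b::real_vector) \<Rightarrow> nat \<Rightarrow> bool"
  where "cohom_iso W D W' D' j \<longleftrightarrow>
    (\<exists>f. linear f \<and> f ` cker W D j \<subseteq> cker W' D' j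
       \<and> (\<forall>x\<in>cker W D j. f x \<in> cim W' D' j \<longleftrightarrow> x \<in> cim W D j)
       \<and> (\<forall>y\<in>cker W' D' j. \<exists>x\<in>cker W D j. y - f x \<in> cim W' D' j))"

definition cohom_findim :: "(nat \<Rightarrow> 'a set) \<Rightarrow> (nat \<Rightarrow> 'a \<Rightarrow> 'a::real_vector) \<Rightarrow> nat \<Rightarrow> bool"
  where "cohom_findim W D j \<longleftrightarrow>
    (\<exists>S. finite S \<and> S \<subseteq> cker W D j \<and> cker W D j \<subseteq> span (S \<union> cim W D j))"

definition fredholm_complex :: "(nat \<Rightarrow> 'a set) \<Rightarrow> (nat \<Rightarrow> 'a \<Rightarrow> 'a::real_vector) \<Rightarrow> bool"
  where "fredholm_complex W D \<longleftrightarrow> (\<forall>j. cohom_findim W D j)"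

definition exact_complex :: "(nat \<Rightarrow> 'a set) \<Rightarrow> (nat \<Rightarrow> 'a \<Rightarrow> 'a::real_vector) \<Rightarrow> bool"
  where "exact_complex W D \<longleftrightarrow> (\<forall>j. cker W D j = cim W D j)"

text \<open>H(g^j,P_j) = P_j(H(g^j)).\<close>
definition Hproj :: "(nat \<Rightarrow> 'v set) \<Rightarrow> (nat \<Rightarrow> 'v \<Rightarrow> 'v) \<Rightarrow> nat \<Rightarrow> 'v set"
  where "Hproj V P j = P j ` V j"

definition kerP :: "(nat \<Rightarrow> 'v set) \<Rightarrow> (nat \<Rightarrow> 'v \<Rightarrow> 'v::zero) \<Rightarrow> nat \<Rightarrow> 'v set"
  where "kerP V P k = {x \<in> V k. P k x = 0}"

definition dsum :: "(nat \<Rightarrow> 'v set) \<Rightarrow> nat \<Rightarrow> (nat \<Rightarrow> 'v::zero) set"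
  where "dsum S n = {u. (\<forall>k\<le>n. u k \<in> S k) \<and> (\<forall>k>n. u k = 0)}"

text \<open>H(g^[j]) = H(g^j) + H(g^(j-1)) + ... + H(g^0).\<close>
definition lift_space :: "(nat \<Rightarrow> 'v set) \<Rightarrow> nat \<Rightarrow> (nat \<Rightarrow> 'v::zero) set"
  where "lift_space V j = dsum V j"

text \<open>A_[j](u_j,...,u_0) = (A_j u_j, (1-P_j)u_j, P_(j-1)u_(j-1), (1-P_(j-2))u_(j-2), ...),
  the component belonging to H(g^k) being (1-P_k)u_k if j-k is even and P_k u_k if odd.\<close>
definition lift_op :: "(nat \<Rightarrow> 'v \<Rightarrow> 'v) \<Rightarrow> (nat \<Rightarrow> 'v \<Rightarrow> 'v) \<Rightarrow> nat
    \<Rightarrow> (nat \<Rightarrow> 'v) \<Rightarrow> (nat \<Rightarrow> 'v::real_vector)"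
  where "lift_op A P j u = (\<lambda>k. if k = Suc j then A j (u j)
            else if k \<le> j then (if even (j - k) then u k - P k (u k) else P k (u k))
            else 0)"

end

theory Submission
  imports Defs
begin

text \<open>Let C_j = ker P_{j-1} \<oplus> im P_{j-2} \<oplus> ker P_{j-3} \<oplus> ... be the part of
  H(g^[j]) below its top component.  Computing componentwise, ker A_[j] = ker A_j \<oplus> C_j, and
  since the parities in A_[j-1] are shifted by one, im A_[j-1] = im A_{j-1} \<oplus> C_j.  So in
  degree j kernel and image of the lift are those of the original complex padded by one and the
  same summand, and such a padding changes neither the cohomology, nor its finite
  dimensionality, nor exactness.  None of this uses that A_j lands in H(g^{j+1},P_{j+1}) or
  that A is a complex.\<close>

lemma dsum_cong: "(\<And>k. k \<le> n \<Longrightarrow> S k = T k) \<Longrightarrow> dsum S n = dsum T n"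
  by (auto simp: dsum_def)

lemma linear_fun_upd_zero: "linear (\<lambda>x. (0 :: 'a \<Rightarrow> 'b::real_vector)(j := x))"
  by (rule linearI) (auto simp: fun_eq_iff scaleR_fun_def)

lemma linear_component: "linear (\<lambda>u :: 'a \<Rightarrow> 'b::real_vector. u j)"
  by (rule linearI) (auto simp: scaleR_fun_def)

locale cohomology_padding =
  fixes W :: "nat \<Rightarrow> 'a::real_vector set" and D :: "nat \<Rightarrow> 'a \<Rightarrow> 'a"
    and W' :: "nat \<Rightarrow> (nat \<Rightarrow> 'a) set" and D' :: "nat \<Rightarrow> (nat \<Rightarrow> 'a) \<Rightarrow> (nat \<Rightarrow> 'a)"
    and j :: nat and C :: "nat \<Rightarrow> 'a set"
  assumes cker_padded: "cker W' D' j = dsum (\<lambda>k. if k = j then cker W D j else C k) j"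
    and cim_padded: "cim W' D' j = dsum (\<lambda>k. if k = j then cim W D j else C k) j"
    and zero_in_cim: "0 \<in> cim W D j"
    and zero_in_summand: "\<And>k. k < j \<Longrightarrow> 0 \<in> C k"
begin

abbreviation padded :: "'a set \<Rightarrow> (nat \<Rightarrow> 'a) set"
  where "padded X \<equiv> dsum (\<lambda>k. if k = j then X else C k) j"

lemma fun_upd_zero_in_padded_iff: "0(j := x) \<in> padded X \<longleftrightarrow> x \<in> X"
  using zero_in_summand by (auto simp: dsum_def)

lemma component_in_padded: "u \<in> padded X \<Longrightarrow> u j \<in> X"
  by (auto simp: dsum_def)

lemma diff_fun_upd_component_in_padded:
  assumes "u \<in> padded X" and "0 \<in> Y"
  shows "u - 0(j := u j) \<in> padded Y"
  using assms by (auto simp: dsum_def)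

lemma padded_eq_iff: "padded X = padded Y \<longleftrightarrow> X = Y"
  using fun_upd_zero_in_padded_iff by blast

lemma cohom_iso: "cohom_iso W D W' D' j"
  unfolding cohom_iso_def cker_padded cim_padded
proof (intro exI[of _ "\<lambda>x. 0(j := x)"] conjI ballI)
  fix y assume "y \<in> padded (cker W D j)"
  then show "\<exists>x\<in>cker W D j. y - 0(j := x) \<in> padded (cim W D j)"
    using component_in_padded diff_fun_upd_component_in_padded zero_in_cim by blast
qed (auto simp: linear_fun_upd_zero fun_upd_zero_in_padded_iff)

lemma cohom_findim_iff: "cohom_findim W' D' j \<longleftrightarrow> cohom_findim W D j"
proof
  assume "cohom_findim W' D' j"
  then obtain S where S: "finite S" "S \<subseteq> padded (cker W D j)"
    "padded (cker W D j) \<subseteq> span (S \<union> padded (cim W D j))"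
    by (auto simp: cohom_findim_def cker_padded cim_padded)
  have "x \<in> span ((\<lambda>u. u j) ` S \<union> cim W D j)" if x: "x \<in> cker W D j" for x
  proof -
    have "0(j := x) \<in> span (S \<union> padded (cim W D j))"
      using x S(3) fun_upd_zero_in_padded_iff by blast
    then have "(0(j := x)) j \<in> (\<lambda>u. u j) ` span (S \<union> padded (cim W D j))"
      by (rule imageI)
    also have "\<dots> = span ((\<lambda>u. u j) ` S \<union> (\<lambda>u. u j) ` padded (cim W D j))"
      by (simp only: image_Un[symmetric] span_linear_image[OF linear_component])
    also have "\<dots> \<subseteq> span ((\<lambda>u. u j) ` S \<union> cim W D j)"
      using component_in_padded by (intro span_mono) blast
    finally show ?thesis by simp
  qed
  moreover have "(\<lambda>u. u j) ` S \<subseteq> cker W D j"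
    using S(2) component_in_padded by blast
  ultimately show "cohom_findim W D j"
    unfolding cohom_findim_def using S(1) by blast
next
  assume "cohom_findim W D j"
  then obtain S where S: "finite S" "S \<subseteq> cker W D j" "cker W D j \<subseteq> span (S \<union> cim W D j)"
    by (auto simp: cohom_findim_def)
  let ?T = "(\<lambda>x. 0(j := x)) ` S \<union> padded (cim W D j)"
  have "y \<in> span ?T" if y: "y \<in> padded (cker W D j)" for y
  proof -
    have "0(j := y j) \<in> (\<lambda>x. 0(j := x)) ` span (S \<union> cim W D j)"
      using y S(3) component_in_padded by blast
    also have "\<dots> = span ((\<lambda>x. 0(j := x)) ` S \<union> (\<lambda>x. 0(j := x)) ` cim W D j)"
      by (simp only: image_Un[symmetric] span_linear_image[OF linear_fun_upd_zero])
    also have "\<dots> \<subseteq> span ?T"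
      using fun_upd_zero_in_padded_iff by (intro span_mono) blast
    finally have "0(j := y j) \<in> span ?T" .
    moreover have "y - 0(j := y j) \<in> span ?T"
      using diff_fun_upd_component_in_padded[OF y zero_in_cim] by (simp add: span_base)
    ultimately show ?thesis
      using span_add by (metis diff_add_cancel)
  qed
  moreover have "(\<lambda>x. 0(j := x)) ` S \<subseteq> padded (cker W D j)"
    using S(2) fun_upd_zero_in_padded_iff by blast
  ultimately show "cohom_findim W' D' j"
    unfolding cohom_findim_def cker_padded cim_padded using S(1) by blast
qed

lemma exact_at_iff: "cker W' D' j = cim W' D' j \<longleftrightarrow> cker W D j = cim W D j"
  by (simp add: cker_padded cim_padded padded_eq_iff)

end

locale projection_complex =
  fixes V :: "nat \<Rightarrow> 'v::real_vector set" and P A :: "nat \<Rightarrow> 'v \<Rightarrow> 'v"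
  assumes subspace_V: "\<And>j. subspace (V j)"
    and linear_P: "\<And>j. linear (P j)"
    and P_maps: "\<And>j x. x \<in> V j \<Longrightarrow> P j x \<in> V j"
    and P_idem: "\<And>j x. x \<in> V j \<Longrightarrow> P j (P j x) = P j x"
    and linear_A: "\<And>j. linear (A j)"
    and A_diff_P: "\<And>j x. x \<in> V j \<Longrightarrow> A j (x - P j x) = 0"
begin

definition lift_summand :: "nat \<Rightarrow> nat \<Rightarrow> 'v set"
  where "lift_summand j k = (if odd (j - k) then kerP V P k else Hproj V P k)"

lemma Hproj_iff: "x \<in> Hproj V P k \<longleftrightarrow> x \<in> V k \<and> P k x = x"
  unfolding Hproj_def using P_maps P_idem by (auto intro: rev_image_eqI)

lemma P_in_Hproj: "x \<in> V k \<Longrightarrow> P k x \<in> Hproj V P k"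
  by (simp add: Hproj_def)

lemma zero_in_Hproj: "0 \<in> Hproj V P k"
  by (simp add: Hproj_iff subspace_0[OF subspace_V] linear_0[OF linear_P])

lemma zero_in_kerP: "0 \<in> kerP V P k"
  by (simp add: kerP_def subspace_0[OF subspace_V] linear_0[OF linear_P])

lemma diff_P_in_kerP: "x \<in> V k \<Longrightarrow> x - P k x \<in> kerP V P k"
  by (simp add: kerP_def P_maps P_idem linear_diff[OF linear_P] subspace_diff[OF subspace_V])

lemma A_P: "x \<in> V j \<Longrightarrow> A j (P j x) = A j x"
  using A_diff_P by (simp add: linear_diff[OF linear_A])

lemma A_kerP: "x \<in> kerP V P j \<Longrightarrow> A j x = 0"
  using A_diff_P[of x j] by (simp add: kerP_def)

lemma lift_op_eq_zero_iff:
  "lift_op A P j u = 0 \<longleftrightarrow>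
     A j (u j) = 0 \<and> (\<forall>k\<le>j. if odd (j - k) then P k (u k) = 0 else P k (u k) = u k)"
proof -
  have "lift_op A P j u k = 0 \<longleftrightarrow> (k = Suc j \<longrightarrow> A j (u j) = 0) \<and>
      (k \<le> j \<longrightarrow> (if odd (j - k) then P k (u k) = 0 else P k (u k) = u k))" for k
    by (auto simp: lift_op_def)
  then show ?thesis
    by (auto simp: fun_eq_iff)
qed

lemma lift_summand_iff:
  "x \<in> lift_summand j k \<longleftrightarrow> x \<in> V k \<and> (if odd (j - k) then P k x = 0 else P k x = x)"
  by (simp add: lift_summand_def Hproj_iff kerP_def)

lemma lift_kernel:
  "{u \<in> lift_space V j. lift_op A P j u = 0} =
     dsum (\<lambda>k. if k = j then {x \<in> Hproj V P j. A j x = 0} else lift_summand j k) j"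
proof -
  have "u \<in> lift_space V j \<and> lift_op A P j u = 0 \<longleftrightarrow>
      (\<forall>k\<le>j. u k \<in> lift_summand j k) \<and> A j (u j) = 0 \<and> (\<forall>k>j. u k = 0)" for u
    unfolding lift_op_eq_zero_iff lift_summand_iff lift_space_def dsum_def by auto
  then show ?thesis
    by (auto simp: dsum_def lift_summand_iff Hproj_iff)
qed

lemma lift_image:
  "lift_op A P j ` lift_space V j =
     dsum (\<lambda>k. if k = Suc j then A j ` Hproj V P j
                else if even (j - k) then kerP V P k else Hproj V P k) (Suc j)"
  (is "_ = dsum ?I (Suc j)")
proof (intro equalityI subsetI)
  fix w assume "w \<in> lift_op A P j ` lift_space V j"
  then obtain u where u: "u \<in> lift_space V j" and w: "w = lift_op A P j u"
    by blast
  have uV: "u k \<in> V k" if "k \<le> j" for k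
    using u that by (simp add: lift_space_def dsum_def)
  have "A j (u j) = A j (P j (u j))"
    using A_P uV by simp
  then have "A j (u j) \<in> A j ` Hproj V P j"
    using P_in_Hproj uV by blast
  with uV show "w \<in> dsum ?I (Suc j)"
    by (auto simp: w lift_op_def dsum_def diff_P_in_kerP P_in_Hproj)
next
  fix w assume w: "w \<in> dsum ?I (Suc j)"
  then have w_comp: "w k \<in> ?I k" if "k \<le> Suc j" for k
    using that by (simp add: dsum_def)
  obtain y where y: "y \<in> Hproj V P j" "w (Suc j) = A j y"
    using w_comp[of "Suc j"] by auto
  have wj: "w j \<in> kerP V P j"
    using w_comp[of j] by simp
  have wV: "w k \<in> V k" if "k \<le> j" for k
    using w_comp[of k] that by (auto simp: kerP_def Hproj_iff split: if_splits)
  define u where "u = w(j := y + w j, Suc j := 0)"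
  have "u \<in> lift_space V j"
    using w y wV by (auto simp: u_def lift_space_def dsum_def Hproj_iff subspace_add[OF subspace_V])
  moreover have "lift_op A P j u = w"
  proof
    fix k
    show "lift_op A P j u k = w k"
    proof (cases "k \<le> Suc j")
      case True
      then show ?thesis
        using w_comp[OF True] y wj A_kerP[OF wj]
        by (auto simp: lift_op_def u_def Hproj_iff kerP_def linear_add[OF linear_A]
            linear_add[OF linear_P])
    next
      case False
      then show ?thesis
        using w by (simp add: lift_op_def dsum_def)
    qed
  qed
  ultimately show "w \<in> lift_op A P j ` lift_space V j"
    by blast
qed

lemma cker_lift:
  "cker (lift_space V) (lift_op A P) j =
     dsum (\<lambda>k. if k = j then cker (Hproj V P) A j else lift_summand j k) j"
  unfolding cker_def by (rule lift_kernel)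

lemma cim_lift:
  "cim (lift_space V) (lift_op A P) j =
     dsum (\<lambda>k. if k = j then cim (Hproj V P) A j else lift_summand j k) j"
proof (cases j)
  case 0
  then show ?thesis
    by (auto simp: cim_def dsum_def fun_eq_iff) (metis neq0_conv)
next
  case (Suc i)
  have "cim (lift_space V) (lift_op A P) j = lift_op A P i ` lift_space V i"
    by (simp add: Suc cim_def)
  also have "\<dots> = dsum (\<lambda>k. if k = Suc i then A i ` Hproj V P i
                      else if even (i - k) then kerP V P k else Hproj V P k) (Suc i)"
    by (rule lift_image)
  also have "\<dots> = dsum (\<lambda>k. if k = Suc i then cim (Hproj V P) A (Suc i)
                      else lift_summand (Suc i) k) (Suc i)"
    by (rule dsum_cong) (auto simp: cim_def lift_summand_def Suc_diff_le)
  finally show ?thesis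
    by (simp only: Suc)
qed

lemma lift_cohomology_padding:
  "cohomology_padding (Hproj V P) A (lift_space V) (lift_op A P) j (lift_summand j)"
proof
  show "0 \<in> cim (Hproj V P) A j"
    using zero_in_Hproj linear_0[OF linear_A] by (simp add: cim_def) (metis image_eqI)
qed (auto simp: cker_lift cim_lift lift_summand_def zero_in_Hproj zero_in_kerP)

end

theorem mainTheorem13:
  fixes V :: "nat \<Rightarrow> 'v::real_vector set"
    and P A :: "nat \<Rightarrow> 'v \<Rightarrow> 'v"
  assumes V_sub: "\<And>j. subspace (V j)"
    and P_lin: "\<And>j. linear (P j)"
    and P_maps: "\<And>j x. x \<in> V j \<Longrightarrow> P j x \<in> V j"
    and P_idem: "\<And>j x. x \<in> V j \<Longrightarrow> P j (P j x) = P j x"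
    and A_lin: "\<And>j. linear (A j)"
    and A_maps: "\<And>j x. x \<in> V j \<Longrightarrow> A j x \<in> V (Suc j)"
    and A_T1: "\<And>j x. x \<in> V j \<Longrightarrow> A j x - P (Suc j) (A j x) = 0"
    and A_T2: "\<And>j x. x \<in> V j \<Longrightarrow> A j (x - P j x) = 0"
    and cplx: "\<And>j x. x \<in> Hproj V P j \<Longrightarrow> A (Suc j) (A j x) = 0"
  shows
    "(\<forall>j. {u \<in> lift_space V j. lift_op A P j u = 0} =
          dsum (\<lambda>k. if k = j then {x \<in> Hproj V P j. A j x = 0}
                     else if odd (j - k) then kerP V P k else Hproj V P k) j)
     \<and> (\<forall>j. lift_op A P j ` lift_space V j =
          dsum (\<lambda>k. if k = Suc j then A j ` Hproj V P j
                     else if even (j - k) then kerP V P k else Hproj V P k) (Suc j))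
     \<and> (\<forall>j. cohom_iso (Hproj V P) A (lift_space V) (lift_op A P) j)
     \<and> (fredholm_complex (Hproj V P) A \<longleftrightarrow> fredholm_complex (lift_space V) (lift_op A P))
     \<and> (exact_complex (Hproj V P) A \<longleftrightarrow> exact_complex (lift_space V) (lift_op A P))"
proof -
  interpret projection_complex V P A
    using V_sub P_lin P_maps P_idem A_lin A_T2 by (simp add: projection_complex_def)
  note padding = lift_cohomology_padding
  show ?thesis
    using lift_kernel lift_image
      cohomology_padding.cohom_iso[OF padding]
      cohomology_padding.cohom_findim_iff[OF padding]
      cohomology_padding.exact_at_iff[OF padding]
    unfolding lift_summand_def fredholm_complex_def exact_complex_def
    by auto
qed

end
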